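(* Let $\mathbf{x},\mathbf{y}$ lie in the upper half-plane and let $\mathbf{B}=\frac12\begin{pmatrix}\mathbf{x}+\mathbf{y}&\mathbf{x}-\mathbf{y}\\ \mathbf{x}-\mathbf{y}&\mathbf{x}+\mathbf{y}\end{pmatrix}$. Then $$\mathcal{F}(\mathbf{B})=\frac14\, f^3(\mathbf{x})f^3(\mathbf{y})\,(\mathrm{Im}\,\mathbf{x})(\mathrm{Im}\,\mathbf{y})\,\left|\vartheta_3^4(\mathbf{x})\vartheta_4^4(\mathbf{y})-\vartheta_4^4(\mathbf{x})\vartheta_3^4(\mathbf{y})\right|,$$ where $f(\sigma)=(\mathrm{Im}\,\sigma)^{1/2}|\vartheta_2(\sigma)\vartheta_3(\sigma)\vartheta_4(\sigma)|^{2/3}$.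
   Context: $\mathcal{F}(\mathbf{B})=(\det\mathrm{Im}\,\mathbf{B})^{5/2}\prod_{s=1}^{10}|\Theta[\beta_s](\mathbf{B})|$, where for $\mathbf{p},\mathbf{q}\in\{0,\frac12\}^2$, $\Theta[^{\mathbf{p}}_{\mathbf{q}}](\mathbf{B})=\sum_{\mathbf{m}\in\mathbb{Z}^2}\exp\{\pi i\langle\mathbf{B}(\mathbf{m}+\mathbf{p}),\mathbf{m}+\mathbf{p}\rangle+2\pi i\langle\mathbf{m}+\mathbf{p},\mathbf{q}\rangle\}$, and $\beta_1,\dots,\beta_{10}$ are the ten even characteristics ($4\langle\mathbf{p},\mathbf{q}\rangle$ even). The genus one theta constants are $\vartheta_2(\sigma)=\sum_{n\in\mathbb{Z}}e^{\pi i\sigma(n+1/2)^2}$, $\vartheta_3(\sigma)=\sum_{n}e^{\pi i\sigma n^2}$, $\vartheta_4(\sigma)=\sum_n(-1)^ne^{\pi i\sigma n^2}$. *)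

theory Defs
  imports "HOL-Analysis.Analysis"
begin

text \<open>The bilinear form is the (unconjugated) quadratic form: sum_ij B_ij v_i v_j.\<close>

definition vec2 :: "real \<Rightarrow> real \<Rightarrow> real^2" where
  "vec2 a b = (\<chi> i. if i = 1 then a else b)"

definition theta2 :: "real^2 \<Rightarrow> real^2 \<Rightarrow> complex^2^2 \<Rightarrow> complex" where
  "theta2 p q B = (\<Sum>\<^sub>\<infinity>m\<in>(UNIV :: (int \<times> int) set).
     (let v = vec2 (of_int (fst m) + p$1) (of_int (snd m) + p$2) in
       exp (pi * \<i> * (\<Sum>i\<in>UNIV. \<Sum>j\<in>UNIV. B$i$j * of_real (v$i) * of_real (v$j))
            + 2 * pi * \<i> * of_real (v \<bullet> q))))"

definition half_chars :: "(real^2) set" where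
  "half_chars = {v. \<forall>i. v$i \<in> {0, 1/2}}"

definition even_chars :: "((real^2) \<times> (real^2)) set" where
  "even_chars = {(p, q). p \<in> half_chars \<and> q \<in> half_chars \<and> even (\<lfloor>4 * (p \<bullet> q)\<rfloor>)}"

definition Im_mat :: "complex^2^2 \<Rightarrow> real^2^2" where
  "Im_mat B = (\<chi> i j. Im (B$i$j))"

definition FF :: "complex^2^2 \<Rightarrow> real" where
  "FF B = (det (Im_mat B)) powr (5/2) * (\<Prod>(p,q)\<in>even_chars. cmod (theta2 p q B))"

definition jtheta2 :: "complex \<Rightarrow> complex" where
  "jtheta2 s = (\<Sum>\<^sub>\<infinity>n\<in>(UNIV :: int set). exp (pi * \<i> * s * (of_int n + 1/2)^2))"

definition jtheta3 :: "complex \<Rightarrow> complex" where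
  "jtheta3 s = (\<Sum>\<^sub>\<infinity>n\<in>(UNIV :: int set). exp (pi * \<i> * s * (of_int n)^2))"

definition jtheta4 :: "complex \<Rightarrow> complex" where
  "jtheta4 s = (\<Sum>\<^sub>\<infinity>n\<in>(UNIV :: int set). (-1) powi n * exp (pi * \<i> * s * (of_int n)^2))"

definition ff :: "complex \<Rightarrow> real" where
  "ff s = sqrt (Im s) * (cmod (jtheta2 s * jtheta3 s * jtheta4 s)) powr (2/3)"

end

theory Submission
  imports Defs
begin

(* For the matrix B of the theorem, <B v, v> = x (v1 + v2)^2 / 2 + y (v1 - v2)^2 / 2.  Splitting the
   lattice sum by the parity of n + m and substituting (n, m) = (k + l + e, k - l), e in {0, 1},
   turns every genus two theta constant at B into a sum of two products of genus one theta
   constants with characteristics, taken at 2x and at 2y.  The case x = y of the same computation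
   gives the classical duplication formulas, which express theta_3^2, theta_4^2, theta_3 theta_4,
   theta_2 theta_3 and theta_2 theta_4 at sigma through theta constants at 2 sigma.  Evaluating the
   ten even characteristics and inserting these formulas shows that the product of the ten theta
   constants equals
     - (theta_3^4(x) theta_4^4(y) - theta_4^4(x) theta_3^4(y)) / 4
       * (theta_2 theta_3 theta_4)^2(x) * (theta_2 theta_3 theta_4)^2(y);
   taking moduli and using det Im B = Im x * Im y gives the formula. *)

lemma square_add_ge_abs_minus:
  fixes t a :: real
  shows "\<bar>t\<bar> - (\<bar>a\<bar> + 1/2)\<^sup>2 \<le> (t + a)\<^sup>2"
proof -
  have "(\<bar>t\<bar> - \<bar>a\<bar>)\<^sup>2 \<le> (t + a)\<^sup>2"
    by (cases "t \<ge> 0"; cases "a \<ge> 0")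
      (auto simp: power2_eq_square algebra_simps mult_nonneg_nonpos mult_nonpos_nonpos)
  moreover have "\<bar>t\<bar> - (\<bar>a\<bar> + 1/2)\<^sup>2 \<le> (\<bar>t\<bar> - \<bar>a\<bar>)\<^sup>2"
    using sum_power2_ge_zero[of "\<bar>t\<bar> - \<bar>a\<bar> - 1/2" a]
    by (simp add: power2_eq_square algebra_simps)
  ultimately show ?thesis by linarith
qed

lemma summable_on_int_from_halves:
  fixes g :: "int \<Rightarrow> 'a::{uniform_topological_group_add, topological_comm_monoid_add,
                           ab_group_add, complete_uniform_space}"
  assumes "(\<lambda>n. g (int n)) summable_on UNIV" and "(\<lambda>n. g (- int n)) summable_on UNIV"
  shows "g summable_on UNIV"
proof -
  have "g summable_on range int"
    using assms(1) by (subst summable_on_reindex) (auto simp: o_def)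
  moreover have "g summable_on range (\<lambda>n. - int n)"
    using assms(2) by (subst summable_on_reindex) (auto simp: o_def inj_on_def)
  ultimately have "g summable_on range int \<union> range (\<lambda>n. - int n)"
    by (rule summable_on_union)
  also have "range int \<union> range (\<lambda>n. - int n) = UNIV"
  proof (intro set_eqI iffI)
    show "x \<in> range int \<union> range (\<lambda>n. - int n)" for x :: int
      by (cases x rule: int_cases2) auto
  qed simp
  finally show ?thesis .
qed

lemma gaussian_summable_on_int:
  fixes c a :: real
  assumes "c > 0"
  shows "(\<lambda>n::int. exp (- c * (of_int n + a)\<^sup>2)) summable_on UNIV"
proof -
  define K where "K = c * (\<bar>a\<bar> + 1/2)\<^sup>2"
  have "summable (\<lambda>n::nat. exp K * exp (- c) ^ n)"
    using assms by (intro summable_mult summable_geometric) auto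
  then have "(\<lambda>n::nat. exp K * exp (- c * \<bar>of_int (int n)\<bar>)) summable_on UNIV"
    by (simp add: summable_on_UNIV_nonneg_real_iff exp_of_nat_mult[symmetric] mult.commute)
  then have "(\<lambda>n::int. exp K * exp (- c * \<bar>of_int n\<bar>)) summable_on UNIV"
    by (intro summable_on_int_from_halves) simp_all
  then show ?thesis
  proof (rule summable_on_comparison_test)
    fix n :: int
    have "- c * (of_int n + a)\<^sup>2 \<le> K + - c * \<bar>of_int n\<bar>"
      using mult_left_mono[OF square_add_ge_abs_minus[of "of_int n" a], of c] assms
      by (simp add: K_def algebra_simps)
    then show "exp (- c * (of_int n + a)\<^sup>2) \<le> exp K * exp (- c * \<bar>of_int n\<bar>)"
      by (simp flip: exp_add)
  qed simp
qed

lemma has_sum_product: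
  fixes f :: "'a \<Rightarrow> complex" and g :: "'b \<Rightarrow> complex"
  assumes f: "(\<lambda>x. norm (f x)) summable_on A" and g: "(\<lambda>y. norm (g y)) summable_on B"
  shows "((\<lambda>(x, y). f x * g y) has_sum (infsum f A * infsum g B)) (A \<times> B)"
proof -
  let ?F = "\<lambda>(x, y). f x * g y"
  have "(\<lambda>z. norm (?F z)) summable_on A \<times> B"
  proof (subst Infinite_Sum.abs_summable_on_Sigma_iff, intro conjI ballI)
    show "(\<lambda>y. norm (?F (x, y))) summable_on B" for x
      using summable_on_cmult_right[OF g, of "norm (f x)"] by (simp add: norm_mult)
    show "(\<lambda>x. norm (\<Sum>\<^sub>\<infinity>y\<in>B. norm (?F (x, y)))) summable_on A"
      using summable_on_cmult_left[OF f, of "\<Sum>\<^sub>\<infinity>y\<in>B. norm (g y)"]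
      by (simp add: norm_mult infsum_cmult_right' infsum_nonneg)
  qed
  then have summable: "?F summable_on A \<times> B"
    by (simp add: summable_on_iff_abs_summable_on_complex)
  have "(\<Sum>\<^sub>\<infinity>(x, y)\<in>A \<times> B. f x * g y) = (\<Sum>\<^sub>\<infinity>x\<in>A. \<Sum>\<^sub>\<infinity>y\<in>B. f x * g y)"
    using infsum_Sigma_banach[OF summable] by simp
  also have "\<dots> = infsum f A * infsum g B"
    by (simp add: infsum_cmult_right' infsum_cmult_left')
  finally show ?thesis
    using has_sum_infsum[OF summable] by simp
qed

lemma has_sum_int_pairs_by_parity:
  fixes F :: "int \<times> int \<Rightarrow> 'a::topological_comm_monoid_add"
  assumes "((\<lambda>(k, l). F (k + l, k - l)) has_sum S) UNIV"
    and "((\<lambda>(k, l). F (k + l + 1, k - l)) has_sum T) UNIV"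
  shows "(F has_sum (S + T)) UNIV"
proof -
  define h0 :: "int \<times> int \<Rightarrow> int \<times> int" where "h0 = (\<lambda>(k, l). (k + l, k - l))"
  define h1 :: "int \<times> int \<Rightarrow> int \<times> int" where "h1 = (\<lambda>(k, l). (k + l + 1, k - l))"
  have "inj h0" "inj h1"
    by (auto simp: h0_def h1_def inj_on_def)
  moreover have "F \<circ> h0 = (\<lambda>(k, l). F (k + l, k - l))" "F \<circ> h1 = (\<lambda>(k, l). F (k + l + 1, k - l))"
    by (auto simp: h0_def h1_def)
  ultimately have "(F has_sum S) (range h0)" "(F has_sum T) (range h1)"
    using assms by (simp_all add: has_sum_reindex)
  moreover have "range h0 = {(n, m). even (n + m)}"
  proof safe
    fix n m :: int assume "even (n + m)"
    then obtain j where "n + m = 2 * j" by (rule evenE)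
    then show "(n, m) \<in> range h0"
      by (intro range_eqI[of _ _ "(j, j - m)"]) (simp add: h0_def)
  qed (auto simp: h0_def)
  moreover have "range h1 = {(n, m). odd (n + m)}"
  proof safe
    fix n m :: int assume "odd (n + m)"
    then obtain j where "n + m = 2 * j + 1" by (rule oddE)
    then show "(n, m) \<in> range h1"
      by (intro range_eqI[of _ _ "(j, j - m)"]) (simp add: h1_def)
  qed (auto simp: h1_def)
  ultimately have "(F has_sum (S + T)) ({(n, m). even (n + m)} \<union> {(n, m). odd (n + m)})"
    by (intro has_sum_Un_disjoint) auto
  moreover have "{(n, m). even (n + m)} \<union> {(n, m). odd (n + m)} = (UNIV :: (int \<times> int) set)"
    by auto
  ultimately show ?thesis
    by simp
qed

definition theta_char_term :: "real \<Rightarrow> real \<Rightarrow> complex \<Rightarrow> int \<Rightarrow> complex" where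
  "theta_char_term a b t n =
     exp (pi * \<i> * (t * (of_real (of_int n + a))\<^sup>2 + 2 * of_real ((of_int n + a) * b)))"

(* The phase exp (2 pi i (n + a) b) is the one used by theta2, so that theta2 at B splits into
   products of theta_char without extra phase factors. *)
definition theta_char :: "real \<Rightarrow> real \<Rightarrow> complex \<Rightarrow> complex" where
  "theta_char a b t = (\<Sum>\<^sub>\<infinity>n. theta_char_term a b t n)"

lemma norm_theta_char_term: "norm (theta_char_term a b t n) = exp (- pi * Im t * (of_int n + a)\<^sup>2)"
  by (simp add: theta_char_term_def power2_eq_square)

lemma theta_char_term_abs_summable:
  "Im t > 0 \<Longrightarrow> (\<lambda>n. norm (theta_char_term a b t n)) summable_on UNIV"
  unfolding norm_theta_char_term using gaussian_summable_on_int[of "pi * Im t" a] by simp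

(* The summand of theta2 (vec2 a b) (vec2 s r) B at v = (n + a, m + b), written with the
   quadratic form of the theorem's matrix B in rotated coordinates. *)
definition theta_rotation_term ::
    "complex \<Rightarrow> complex \<Rightarrow> real \<Rightarrow> real \<Rightarrow> real \<Rightarrow> real \<Rightarrow> int \<times> int \<Rightarrow> complex" where
  "theta_rotation_term x y a b s r = (\<lambda>(n, m). let u = of_int n + a; v = of_int m + b in
     exp (pi * \<i> * (x * of_real ((u + v)\<^sup>2) / 2 + y * of_real ((u - v)\<^sup>2) / 2
                      + 2 * of_real (u * s + v * r))))"

lemma theta_char_rotation:
  assumes "Im x > 0" and "Im y > 0"
  shows "(theta_rotation_term x y a b s r
         has_sum (theta_char ((a + b) / 2) (s + r) (2 * x) * theta_char ((a - b) / 2) (s - r) (2 * y)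
            + theta_char ((a + b + 1) / 2) (s + r) (2 * x) * theta_char ((a - b + 1) / 2) (s - r) (2 * y)))
         UNIV"
proof (rule has_sum_int_pairs_by_parity)
  have "Im (2 * x) > 0" and "Im (2 * y) > 0"
    using assms by simp_all
  then have product: "((\<lambda>(k, l). theta_char_term c e (2 * x) k * theta_char_term d f (2 * y) l)
      has_sum (theta_char c e (2 * x) * theta_char d f (2 * y))) UNIV" for c d e f
    using has_sum_product[OF theta_char_term_abs_summable theta_char_term_abs_summable]
    by (simp add: theta_char_def)
  have "theta_rotation_term x y a b s r (k + l, k - l) = theta_char_term ((a + b) / 2) (s + r) (2 * x) k
      * theta_char_term ((a - b) / 2) (s - r) (2 * y) l" for k l
    unfolding theta_rotation_term_def theta_char_term_def exp_add[symmetric] Let_def prod.case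
    by (rule arg_cong[where f = exp]) (simp add: power2_eq_square field_simps)
  then show "((\<lambda>(k, l). theta_rotation_term x y a b s r (k + l, k - l)) has_sum
      theta_char ((a + b) / 2) (s + r) (2 * x) * theta_char ((a - b) / 2) (s - r) (2 * y)) UNIV"
    using product by (simp only:)
  have "theta_rotation_term x y a b s r (k + l + 1, k - l) = theta_char_term ((a + b + 1) / 2) (s + r) (2 * x) k
      * theta_char_term ((a - b + 1) / 2) (s - r) (2 * y) l" for k l
    unfolding theta_rotation_term_def theta_char_term_def exp_add[symmetric] Let_def prod.case
    by (rule arg_cong[where f = exp]) (simp add: power2_eq_square field_simps)
  then show "((\<lambda>(k, l). theta_rotation_term x y a b s r (k + l + 1, k - l)) has_sum
      theta_char ((a + b + 1) / 2) (s + r) (2 * x) * theta_char ((a - b + 1) / 2) (s - r) (2 * y)) UNIV"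
    using product by (simp only:)
qed

lemma vec2_nth [simp]: "vec2 a b $ 1 = a" "vec2 a b $ 2 = b"
  by (simp_all add: vec2_def)

lemma theta2_rotated_diagonal:
  assumes "Im x > 0" and "Im y > 0"
    and "B = (\<chi> i j. if i = j then (x + y) / 2 else (x - y) / 2)"
  shows "theta2 (vec2 a b) (vec2 s r) B =
    theta_char ((a + b) / 2) (s + r) (2 * x) * theta_char ((a - b) / 2) (s - r) (2 * y)
    + theta_char ((a + b + 1) / 2) (s + r) (2 * x) * theta_char ((a - b + 1) / 2) (s - r) (2 * y)"
proof -
  have "(\<lambda>m. let v = vec2 (of_int (fst m) + vec2 a b $ 1) (of_int (snd m) + vec2 a b $ 2) in
      exp (pi * \<i> * (\<Sum>i\<in>UNIV. \<Sum>j\<in>UNIV. B $ i $ j * of_real (v $ i) * of_real (v $ j))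
           + 2 * pi * \<i> * of_real (v \<bullet> vec2 s r))) = theta_rotation_term x y a b s r"
    unfolding theta_rotation_term_def Let_def
    by (intro ext, clarsimp, rule arg_cong[where f = exp])
      (simp add: assms(3) sum_2 inner_vec_def power2_eq_square field_simps)
  then show ?thesis
    unfolding theta2_def by (simp add: infsumI theta_char_rotation assms)
qed

lemma theta_char_product:
  assumes "Im t > 0"
  shows "theta_char a s t * theta_char b r t =
    theta_char ((a + b) / 2) (s + r) (2 * t) * theta_char ((a - b) / 2) (s - r) (2 * t)
    + theta_char ((a + b + 1) / 2) (s + r) (2 * t) * theta_char ((a - b + 1) / 2) (s - r) (2 * t)"
proof (rule has_sum_unique)
  have "theta_rotation_term t t a b s r = (\<lambda>(n, m). theta_char_term a s t n * theta_char_term b r t m)"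
    unfolding theta_rotation_term_def theta_char_term_def Let_def
    by (intro ext, clarsimp simp flip: exp_add, rule arg_cong[where f = exp])
      (simp add: power2_eq_square field_simps)
  then show "(theta_rotation_term t t a b s r has_sum (theta_char a s t * theta_char b r t)) UNIV"
    using has_sum_product[OF theta_char_term_abs_summable[OF assms] theta_char_term_abs_summable[OF assms]]
    by (simp add: theta_char_def)
qed (rule theta_char_rotation[OF assms assms])

lemma theta_char_shift_char: "theta_char (a + 1) b t = theta_char a b t"
proof -
  have "theta_char_term (a + 1) b t n = theta_char_term a b t (n + 1)" for n
    by (simp add: theta_char_term_def add_ac)
  then have "theta_char (a + 1) b t = (\<Sum>\<^sub>\<infinity>n. theta_char_term a b t (n + 1))"
    by (simp add: theta_char_def)
  also have "\<dots> = theta_char a b t"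
    unfolding theta_char_def by (rule infsum_reindex_bij_betw[OF bij_plus_right])
  finally show ?thesis .
qed

lemma theta_char_uminus: "theta_char (- a) (- b) t = theta_char a b t"
proof -
  have "theta_char_term (- a) (- b) t n = theta_char_term a b t (- n)" for n
    by (simp add: theta_char_term_def power2_eq_square algebra_simps)
  then have "theta_char (- a) (- b) t = (\<Sum>\<^sub>\<infinity>n. theta_char_term a b t (- n))"
    by (simp add: theta_char_def)
  also have "\<dots> = theta_char a b t"
    unfolding theta_char_def by (rule infsum_reindex_bij_betw[OF bij_uminus])
  finally show ?thesis .
qed

lemma theta_char_shift_arg: "theta_char a (b + 1) t = cis (2 * pi * a) * theta_char a b t"
proof -
  have "theta_char_term a (b + 1) t n = cis (2 * pi * a) * theta_char_term a b t n" for n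
  proof -
    have "theta_char_term a (b + 1) t n = theta_char_term a b t n * cis (2 * pi * (of_int n + a))"
      by (simp add: theta_char_term_def cis_conv_exp algebra_simps flip: exp_add)
    also have "cis (2 * pi * (of_int n + a)) = cis (2 * pi * a)"
      by (simp add: distrib_left flip: cis_mult)
    finally show ?thesis by simp
  qed
  then show ?thesis
    by (simp add: theta_char_def infsum_cmult_right')
qed

lemma theta_char_half_half [simp]: "theta_char (1/2) (1/2) t = 0"
proof -
  have "theta_char (1/2) (1/2) t = theta_char (1/2) (- (1/2)) t"
    using theta_char_uminus[of "1/2" "1/2" t] theta_char_shift_char[of "- (1/2)" "- (1/2)" t] by simp
  moreover have "theta_char (1/2) (1/2) t = - theta_char (1/2) (- (1/2)) t"
    using theta_char_shift_arg[of "1/2" "- (1/2)" t] by simp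
  ultimately show ?thesis by simp
qed

(* As simp rules these reduce numeral characteristics to 0 <= a <= 1/2 and -1/2 < b <= 1/2. *)
lemma theta_char_normalize:
  "a > 1/2 \<Longrightarrow> theta_char a b t = theta_char (a - 1) b t"
  "a < 0 \<Longrightarrow> theta_char a b t = theta_char (- a) (- b) t"
  "b > 1/2 \<Longrightarrow> theta_char a b t = cis (2 * pi * a) * theta_char a (b - 1) t"
  "b \<le> - (1/2) \<Longrightarrow> theta_char a b t = cis (- (2 * pi * a)) * theta_char a (b + 1) t"
  using theta_char_shift_char[of "a - 1" b t] theta_char_uminus[of "- a" "- b" t]
    theta_char_shift_arg[of a "b - 1" t] theta_char_shift_arg[of a b t]
  by (simp_all add: cis_mult)

lemma jtheta_eq_theta_char:
  "jtheta2 s = theta_char (1/2) 0 s"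
  "jtheta3 s = theta_char 0 0 s"
  "jtheta4 s = theta_char 0 (1/2) s"
proof -
  show "jtheta2 s = theta_char (1/2) 0 s" "jtheta3 s = theta_char 0 0 s"
    by (simp_all add: jtheta2_def jtheta3_def theta_char_def theta_char_term_def mult.assoc)
  have "(-1) powi n * exp (pi * \<i> * s * (of_int n)\<^sup>2) = theta_char_term 0 (1/2) s n" for n
  proof -
    have "(-1) powi n = exp (of_int n * (pi * \<i>))"
      by (simp flip: exp_power_int)
    then show ?thesis
      by (simp add: theta_char_term_def algebra_simps flip: exp_add)
  qed
  then show "jtheta4 s = theta_char 0 (1/2) s"
    by (simp add: jtheta4_def theta_char_def)
qed

lemma jtheta_duplication:
  assumes "Im t > 0"
  shows "(jtheta3 t)\<^sup>2 = (theta_char 0 0 (2 * t))\<^sup>2 + (theta_char (1/2) 0 (2 * t))\<^sup>2"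
    and "(jtheta4 t)\<^sup>2 = (theta_char 0 0 (2 * t))\<^sup>2 - (theta_char (1/2) 0 (2 * t))\<^sup>2"
    and "jtheta3 t * jtheta4 t = (theta_char 0 (1/2) (2 * t))\<^sup>2"
    and "jtheta2 t * jtheta3 t = 2 * (theta_char (1/4) 0 (2 * t))\<^sup>2"
    and "jtheta2 t * jtheta4 t = - 2 * \<i> * (theta_char (1/4) (1/2) (2 * t))\<^sup>2"
  using theta_char_product[OF assms, of 0 0 0 0] theta_char_product[OF assms, of 0 "1/2" 0 "1/2"]
    theta_char_product[OF assms, of 0 0 0 "1/2"] theta_char_product[OF assms, of "1/2" 0 0 0]
    theta_char_product[OF assms, of "1/2" 0 0 "1/2"]
  by (simp_all add: jtheta_eq_theta_char theta_char_normalize power2_eq_square)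

lemma vec2_eq_iff: "vec2 a b = vec2 c d \<longleftrightarrow> a = c \<and> b = d"
  by (auto simp: vec_eq_iff forall_2)

lemma half_chars_eq: "half_chars = {vec2 0 0, vec2 0 (1/2), vec2 (1/2) 0, vec2 (1/2) (1/2)}"
proof (intro set_eqI iffI)
  fix v :: "real^2"
  assume "v \<in> half_chars"
  then have "v $ 1 \<in> {0, 1/2}" "v $ 2 \<in> {0, 1/2}"
    by (auto simp: half_chars_def)
  moreover have "v = vec2 (v $ 1) (v $ 2)"
    by (simp add: vec_eq_iff forall_2)
  ultimately show "v \<in> {vec2 0 0, vec2 0 (1/2), vec2 (1/2) 0, vec2 (1/2) (1/2)}"
    by (metis empty_iff insert_iff)
qed (auto simp: half_chars_def forall_2)

lemma even_chars_eq: "even_chars =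
  {(vec2 0 0, vec2 0 0), (vec2 0 0, vec2 0 (1/2)), (vec2 0 0, vec2 (1/2) 0), (vec2 0 0, vec2 (1/2) (1/2)),
   (vec2 (1/2) (1/2), vec2 0 0), (vec2 (1/2) (1/2), vec2 (1/2) (1/2)),
   (vec2 (1/2) 0, vec2 0 0), (vec2 (1/2) 0, vec2 0 (1/2)),
   (vec2 0 (1/2), vec2 0 0), (vec2 0 (1/2), vec2 (1/2) 0)}"
  by (auto simp: even_chars_def half_chars_eq inner_vec_def sum_2)

lemma prod_theta2_even_chars_doubled:
  assumes x: "Im x > 0" and y: "Im y > 0"
    and B: "B = (\<chi> i j. if i = j then (x + y) / 2 else (x - y) / 2)"
  shows "(\<Prod>(p, q)\<in>even_chars. theta2 p q B) = - 16
      * ((theta_char 0 0 (2 * x) * theta_char 0 0 (2 * y) + theta_char (1/2) 0 (2 * x) * theta_char (1/2) 0 (2 * y))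
        * (theta_char 0 0 (2 * x) * theta_char 0 0 (2 * y) - theta_char (1/2) 0 (2 * x) * theta_char (1/2) 0 (2 * y))
        * (theta_char (1/2) 0 (2 * x) * theta_char 0 0 (2 * y) + theta_char 0 0 (2 * x) * theta_char (1/2) 0 (2 * y))
        * (theta_char 0 0 (2 * x) * theta_char (1/2) 0 (2 * y) - theta_char (1/2) 0 (2 * x) * theta_char 0 0 (2 * y)))
      * (theta_char 0 (1/2) (2 * x) * theta_char (1/4) 0 (2 * x) * theta_char (1/4) (1/2) (2 * x))\<^sup>2
      * (theta_char 0 (1/2) (2 * y) * theta_char (1/4) 0 (2 * y) * theta_char (1/4) (1/2) (2 * y))\<^sup>2"
  unfolding even_chars_eq
  by (simp add: vec2_eq_iff theta2_rotated_diagonal[OF x y B] theta_char_normalize) algebra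

lemma jtheta_product_square_duplication:
  assumes "Im t > 0"
  shows "(jtheta2 t * jtheta3 t * jtheta4 t)\<^sup>2 = - 4 * \<i>
    * (theta_char 0 (1/2) (2 * t) * theta_char (1/4) 0 (2 * t) * theta_char (1/4) (1/2) (2 * t))\<^sup>2"
  using jtheta_duplication(3-5)[OF assms] by algebra

lemma jtheta_quartic_difference:
  assumes x: "Im x > 0" and y: "Im y > 0"
  shows "(jtheta3 x)^4 * (jtheta4 y)^4 - (jtheta4 x)^4 * (jtheta3 y)^4 = - 4
      * ((theta_char 0 0 (2 * x) * theta_char 0 0 (2 * y) + theta_char (1/2) 0 (2 * x) * theta_char (1/2) 0 (2 * y))
        * (theta_char 0 0 (2 * x) * theta_char 0 0 (2 * y) - theta_char (1/2) 0 (2 * x) * theta_char (1/2) 0 (2 * y))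
        * (theta_char (1/2) 0 (2 * x) * theta_char 0 0 (2 * y) + theta_char 0 0 (2 * x) * theta_char (1/2) 0 (2 * y))
        * (theta_char 0 0 (2 * x) * theta_char (1/2) 0 (2 * y) - theta_char (1/2) 0 (2 * x) * theta_char 0 0 (2 * y)))"
  using jtheta_duplication(1,2)[OF x] jtheta_duplication(1,2)[OF y] by algebra

lemma prod_theta2_even_chars:
  assumes x: "Im x > 0" and y: "Im y > 0"
    and B: "B = (\<chi> i j. if i = j then (x + y) / 2 else (x - y) / 2)"
  shows "(\<Prod>(p, q)\<in>even_chars. theta2 p q B) =
    - ((jtheta3 x)^4 * (jtheta4 y)^4 - (jtheta4 x)^4 * (jtheta3 y)^4) / 4
    * (jtheta2 x * jtheta3 x * jtheta4 x)\<^sup>2 * (jtheta2 y * jtheta3 y * jtheta4 y)\<^sup>2"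
  unfolding prod_theta2_even_chars_doubled[OF x y B] jtheta_quartic_difference[OF x y]
    jtheta_product_square_duplication[OF x] jtheta_product_square_duplication[OF y]
  by (simp add: power2_eq_square mult_ac)

lemma det_Im_mat_rotated_diagonal:
  "det (Im_mat (\<chi> i j. if i = j then (x + y) / 2 else (x - y) / 2)) = Im x * Im y"
  by (simp add: Im_mat_def det_2 power2_eq_square field_simps)

lemma cube_powr_two_thirds:
  fixes c :: real
  assumes "c \<ge> 0"
  shows "(c powr (2/3))^3 = c\<^sup>2"
proof (cases "c = 0")
  case False
  then have "(c powr (2/3))^3 = c powr 2"
    by (simp add: powr_power)
  then show ?thesis
    using assms by simp
qed simp

lemma ff_cube:
  assumes "Im s \<ge> 0"
  shows "(ff s)^3 = Im s * sqrt (Im s) * (cmod (jtheta2 s * jtheta3 s * jtheta4 s))\<^sup>2"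
proof -
  have "(ff s)^3 = sqrt (Im s) ^ 3 * (cmod (jtheta2 s * jtheta3 s * jtheta4 s))\<^sup>2"
    by (simp add: ff_def power_mult_distrib cube_powr_two_thirds)
  also have "sqrt (Im s) ^ 3 = Im s * sqrt (Im s)"
    using assms by (simp add: power3_eq_cube)
  finally show ?thesis .
qed

lemma powr_five_halves:
  fixes c :: real
  assumes "c \<ge> 0"
  shows "c powr (5/2) = c\<^sup>2 * sqrt c"
proof -
  have "c powr (5/2) = c powr 2 * c powr (1/2)"
    by (simp flip: powr_add)
  then show ?thesis
    using assms by (simp add: powr_half_sqrt)
qed

theorem lemma5:
  fixes x y :: complex and B :: "complex^2^2"
  assumes "Im x > 0" and "Im y > 0"
    and "B = (\<chi> i j. if i = j then (x + y) / 2 else (x - y) / 2)"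
  shows "FF B = 1/4 * (ff x)^3 * (ff y)^3 * Im x * Im y *
           cmod ((jtheta3 x)^4 * (jtheta4 y)^4 - (jtheta4 x)^4 * (jtheta3 y)^4)"
proof -
  have "(\<Prod>(p, q)\<in>even_chars. cmod (theta2 p q B)) = cmod (\<Prod>(p, q)\<in>even_chars. theta2 p q B)"
    by (simp add: case_prod_unfold flip: prod_norm)
  also have "\<dots> = cmod ((jtheta3 x)^4 * (jtheta4 y)^4 - (jtheta4 x)^4 * (jtheta3 y)^4) / 4
      * (cmod (jtheta2 x * jtheta3 x * jtheta4 x))\<^sup>2 * (cmod (jtheta2 y * jtheta3 y * jtheta4 y))\<^sup>2"
    by (simp only: prod_theta2_even_chars[OF assms] norm_mult norm_divide norm_power norm_minus_cancel)
      simp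
  finally have norm_prod: "(\<Prod>(p, q)\<in>even_chars. cmod (theta2 p q B)) = \<dots>" .
  show ?thesis
    unfolding FF_def norm_prod unfolding assms(3) det_Im_mat_rotated_diagonal
    using assms(1,2)
    by (simp add: powr_five_halves ff_cube real_sqrt_mult power2_eq_square mult_ac)
qed

end
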